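(* Let $G$ be a second-countable ample Hausdorff groupoid, let $R$ be a commutative unital ring with the discrete topology, let $T \le R^\times$, and let $(\Sigma, i, q)$ be a discrete twist by $T$ over $G$. Then $\Sigma$ is topologically trivial, i.e. there is a continuous map $P\colon G \to \Sigma$ with $q \circ P = \mathrm{id}_G$ and $P(G^{(0)}) \subseteq \Sigma^{(0)}$.
   Context: Groupoids are locally compact Hausdorff topological groupoids; $G$ is ample if it has a basis of compact open bisections (a bisection is a set contained in an open set on which $r$ and $s$ restrict to homeomorphisms onto open sets). A discrete twist by $T$ over $G$ is a sequence $G^{(0)} \times T \xrightarrow{i} \Sigma \xrightarrow{q} G$, where $T$ carries the discrete topology, $G^{(0)} \times T$ is the trivial group bundle with fibres $T$, $\Sigma$ is a Hausdorff groupoid with $\Sigma^{(0)} = i(G^{(0)} \times \{1\})$, and $i, q$ are continuous groupoid homomorphisms restricting to homeomorphisms of unit spaces, such that: (1) $i(\{x\} \times T) = q^{-1}(x)$ for all $x \in G^{(0)}$, $i$ is injective, and $q$ is a quotient map; (2) for each $\alpha \in G$ there are an open bisection $B_\alpha \ni \alpha$ of $G$ and a continuous $P_\alpha\colon B_\alpha \to \Sigma$ with $q \circ P_\alpha = \mathrm{id}_{B_\alpha}$ such that $(\beta,z) \mapsto i(r(\beta),z)P_\alpha(\beta)$ is a homeomorphism $B_\alpha \times T \to q^{-1}(B_\alpha)$; (3) $i(r(\varepsilon),z)\varepsilon = \varepsilon\, i(s(\varepsilon),z)$ for all $\varepsilon \in \Sigma$, $z \in T$. *)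

theory Defs
  imports "HOL-Analysis.Analysis"
begin

text \<open>A groupoid is given by its space of arrows (the topspace of gtop), range, source,
  partially defined multiplication (meaningful on composable pairs) and inversion.\<close>

record 'a groupoid =
  gtop :: "'a topology"
  grng :: "'a \<Rightarrow> 'a"
  gsrc :: "'a \<Rightarrow> 'a"
  gmul :: "'a \<Rightarrow> 'a \<Rightarrow> 'a"
  ginv :: "'a \<Rightarrow> 'a"

definition arrows :: "('a, 'b) groupoid_scheme \<Rightarrow> 'a set" where
  "arrows G = topspace (gtop G)"

definition units :: "('a, 'b) groupoid_scheme \<Rightarrow> 'a set" where
  "units G = grng G ` arrows G"

definition composable :: "('a, 'b) groupoid_scheme \<Rightarrow> ('a \<times> 'a) set" where
  "composable G = {(a, b). a \<in> arrows G \<and> b \<in> arrows G \<and> gsrc G a = grng G b}"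

definition is_groupoid :: "('a, 'b) groupoid_scheme \<Rightarrow> bool" where
  "is_groupoid G \<longleftrightarrow>
     (\<forall>a \<in> arrows G. grng G a \<in> arrows G \<and> gsrc G a \<in> arrows G \<and> ginv G a \<in> arrows G) \<and>
     (\<forall>a \<in> arrows G. grng G (grng G a) = grng G a \<and> gsrc G (grng G a) = grng G a) \<and>
     (\<forall>(a, b) \<in> composable G. gmul G a b \<in> arrows G \<and>
        grng G (gmul G a b) = grng G a \<and> gsrc G (gmul G a b) = gsrc G b) \<and>
     (\<forall>a b c. (a, b) \<in> composable G \<and> (b, c) \<in> composable G \<longrightarrow>
        gmul G (gmul G a b) c = gmul G a (gmul G b c)) \<and>
     (\<forall>a \<in> arrows G. gmul G (grng G a) a = a \<and> gmul G a (gsrc G a) = a) \<and>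
     (\<forall>a \<in> arrows G. grng G (ginv G a) = gsrc G a \<and> gsrc G (ginv G a) = grng G a \<and>
        gmul G a (ginv G a) = grng G a \<and> gmul G (ginv G a) a = gsrc G a)"

definition topological_groupoid :: "('a, 'b) groupoid_scheme \<Rightarrow> bool" where
  "topological_groupoid G \<longleftrightarrow> is_groupoid G \<and>
     continuous_map (subtopology (prod_topology (gtop G) (gtop G)) (composable G)) (gtop G)
        (\<lambda>(a, b). gmul G a b) \<and>
     continuous_map (gtop G) (gtop G) (ginv G) \<and>
     continuous_map (gtop G) (gtop G) (grng G) \<and>
     continuous_map (gtop G) (gtop G) (gsrc G)"

definition lcH_groupoid :: "('a, 'b) groupoid_scheme \<Rightarrow> bool" where
  "lcH_groupoid G \<longleftrightarrow> topological_groupoid G \<and> Hausdorff_space (gtop G) \<and>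
     locally_compact_space (gtop G)"

definition unit_top :: "('a, 'b) groupoid_scheme \<Rightarrow> 'a topology" where
  "unit_top G = subtopology (gtop G) (units G)"

definition bisection :: "('a, 'b) groupoid_scheme \<Rightarrow> 'a set \<Rightarrow> bool" where
  "bisection G B \<longleftrightarrow> (\<exists>U. openin (gtop G) U \<and> B \<subseteq> U \<and>
     openin (unit_top G) (grng G ` U) \<and> openin (unit_top G) (gsrc G ` U) \<and>
     homeomorphic_map (subtopology (gtop G) U) (subtopology (gtop G) (grng G ` U)) (grng G) \<and>
     homeomorphic_map (subtopology (gtop G) U) (subtopology (gtop G) (gsrc G ` U)) (gsrc G))"

definition open_bisection :: "('a, 'b) groupoid_scheme \<Rightarrow> 'a set \<Rightarrow> bool" where
  "open_bisection G B \<longleftrightarrow> openin (gtop G) B \<and> bisection G B"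

definition ample :: "('a, 'b) groupoid_scheme \<Rightarrow> bool" where
  "ample G \<longleftrightarrow> (\<forall>U x. openin (gtop G) U \<and> x \<in> U \<longrightarrow>
     (\<exists>B. compactin (gtop G) B \<and> open_bisection G B \<and> x \<in> B \<and> B \<subseteq> U))"

definition groupoid_hom ::
  "('a, 'b) groupoid_scheme \<Rightarrow> ('c, 'd) groupoid_scheme \<Rightarrow> ('a \<Rightarrow> 'c) \<Rightarrow> bool" where
  "groupoid_hom G H f \<longleftrightarrow> (\<forall>a \<in> arrows G. f a \<in> arrows H) \<and>
     (\<forall>(a, b) \<in> composable G. f (gmul G a b) = gmul H (f a) (f b))"

definition trivial_bundle :: "('a, 'b) groupoid_scheme \<Rightarrow> 'r::comm_ring_1 set \<Rightarrow> ('a \<times> 'r) groupoid" where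
  "trivial_bundle G T =
     \<lparr> gtop = prod_topology (unit_top G) (discrete_topology T),
       grng = (\<lambda>(x, z). (x, 1)),
       gsrc = (\<lambda>(x, z). (x, 1)),
       gmul = (\<lambda>(x, z) (y, w). (x, z * w)),
       ginv = (\<lambda>(x, z). (x, SOME w. w \<in> T \<and> z * w = 1)) \<rparr>"

definition discrete_twist ::
  "('a, 'b) groupoid_scheme \<Rightarrow> 'r::comm_ring_1 set \<Rightarrow> ('s, 'c) groupoid_scheme \<Rightarrow>
   ('a \<times> 'r \<Rightarrow> 's) \<Rightarrow> ('s \<Rightarrow> 'a) \<Rightarrow> bool" where
  "discrete_twist G T \<Sigma> i q \<longleftrightarrow>
     lcH_groupoid \<Sigma> \<and>
     units \<Sigma> = i ` (units G \<times> {1}) \<and>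
     \<comment> \<open>i and q are continuous groupoid homomorphisms\<close>
     groupoid_hom (trivial_bundle G T) \<Sigma> i \<and>
     continuous_map (prod_topology (unit_top G) (discrete_topology T)) (gtop \<Sigma>) i \<and>
     groupoid_hom \<Sigma> G q \<and>
     continuous_map (gtop \<Sigma>) (gtop G) q \<and>
     \<comment> \<open>restricting to homeomorphisms of unit spaces\<close>
     homeomorphic_map (unit_top G) (unit_top \<Sigma>) (\<lambda>x. i (x, 1)) \<and>
     homeomorphic_map (unit_top \<Sigma>) (unit_top G) q \<and>
     \<comment> \<open>(1)\<close>
     (\<forall>x \<in> units G. i ` ({x} \<times> T) = {e \<in> arrows \<Sigma>. q e = x}) \<and>
     inj_on i (units G \<times> T) \<and>
     quotient_map (gtop \<Sigma>) (gtop G) q \<and>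
     \<comment> \<open>(2) local triviality\<close>
     (\<forall>\<alpha> \<in> arrows G. \<exists>B P. open_bisection G B \<and> \<alpha> \<in> B \<and>
        continuous_map (subtopology (gtop G) B) (gtop \<Sigma>) P \<and>
        (\<forall>\<beta> \<in> B. q (P \<beta>) = \<beta>) \<and>
        homeomorphic_map (prod_topology (subtopology (gtop G) B) (discrete_topology T))
          (subtopology (gtop \<Sigma>) {e \<in> arrows \<Sigma>. q e \<in> B})
          (\<lambda>(\<beta>, z). gmul \<Sigma> (i (grng G \<beta>, z)) (P \<beta>))) \<and>
     \<comment> \<open>(3) centrality; r(e), s(e) in G0 identified via q\<close>
     (\<forall>e \<in> arrows \<Sigma>. \<forall>z \<in> T.
        gmul \<Sigma> (i (q (grng \<Sigma> e), z)) e = gmul \<Sigma> e (i (q (gsrc \<Sigma> e), z)))"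

end

theory Submission
  imports Defs
begin

(* Each arrow lies in a compact open set carrying a continuous local section of q, and
   by second countability countably many such sets K_1, K_2, ... cover G.  Compact sets
   are closed, so all K_n are clopen, and so is the unit space G0 (closed as the fixed
   set of r, open because G is etale).  With K_0 = G0 and the unit section x |-> i(x,1)
   on it, taking at each arrow the section of the first K_n containing it gives a
   continuous global section, since the pieces K_n - (K_0 u ... u K_(n-1)) are open
   and disjoint. *)

lemma units_eq_fixed_points_of_range:
  assumes "is_groupoid G"
  shows "units G = {a \<in> arrows G. grng G a = a}"
  using assms unfolding units_def is_groupoid_def by auto (metis image_eqI)

lemma closedin_units:
  assumes "topological_groupoid G" "Hausdorff_space (gtop G)"
  shows "closedin (gtop G) (units G)"
proof -
  have "continuous_map (gtop G) (gtop G) (grng G)"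
    using assms(1) by (simp add: topological_groupoid_def)
  then have "closedin (gtop G) {a \<in> topspace (gtop G). grng G a = id a}"
    using assms(2) by (intro closedin_continuous_maps_eq) auto
  moreover have "is_groupoid G"
    using assms(1) by (simp add: topological_groupoid_def)
  ultimately show ?thesis
    by (simp add: units_eq_fixed_points_of_range arrows_def)
qed

lemma openin_units:
  assumes "topological_groupoid G"
    and "\<And>x. x \<in> units G \<Longrightarrow> \<exists>B. open_bisection G B \<and> x \<in> B"
  shows "openin (gtop G) (units G)"
proof (subst openin_subopen, intro ballI)
  fix x assume x: "x \<in> units G"
  have gr: "is_groupoid G" and rc: "continuous_map (gtop G) (gtop G) (grng G)"
    using assms(1) by (simp_all add: topological_groupoid_def)
  obtain B where "open_bisection G B" "x \<in> B" using assms(2) x by blast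
  then obtain U where B: "openin (gtop G) B" "B \<subseteq> U" "openin (gtop G) U"
    and "homeomorphic_map (subtopology (gtop G) U) (subtopology (gtop G) (grng G ` U)) (grng G)"
    by (auto simp: open_bisection_def bisection_def)
  then have inj: "inj_on (grng G) U"
    using Int_absorb1[OF openin_subset[OF B(3)]] by (simp add: homeomorphic_eq_everything_map)
  (* r is injective on U and fixes r a, so an arrow a of B with r a \<in> B equals r a. *)
  define W where "W = B \<inter> {a \<in> topspace (gtop G). grng G a \<in> B}"
  have "openin (gtop G) W"
    unfolding W_def using B(1) rc by (intro openin_Int openin_continuous_map_preimage)
  moreover have "x \<in> W"
    using x \<open>x \<in> B\<close> by (simp add: W_def units_eq_fixed_points_of_range[OF gr] arrows_def)
  moreover have "W \<subseteq> units G"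
  proof
    fix a assume a: "a \<in> W"
    then have "a \<in> arrows G" "a \<in> U" "grng G a \<in> U" using B(2) by (auto simp: W_def arrows_def)
    moreover from \<open>a \<in> arrows G\<close> have "grng G (grng G a) = grng G a"
      using gr by (simp add: is_groupoid_def)
    ultimately show "a \<in> units G"
      using inj gr by (auto simp: units_eq_fixed_points_of_range inj_on_def)
  qed
  ultimately show "\<exists>W. openin (gtop G) W \<and> x \<in> W \<and> W \<subseteq> units G" by blast
qed

lemma continuous_map_first_piece_of_clopen_cover:
  fixes K :: "nat \<Rightarrow> 'a set"
  assumes "\<And>n. openin X (K n)" "\<And>n. closedin X (K n)" "topspace X \<subseteq> (\<Union>n. K n)"
    and "\<And>n. continuous_map (subtopology X (K n)) Y (S n)"
  shows "continuous_map X Y (\<lambda>x. S (LEAST n. x \<in> K n) x)"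
proof -
  define D where "D n = K n - \<Union>(K ` {..<n})" for n
  have first_piece: "x \<in> D (LEAST n. x \<in> K n)" if x: "x \<in> topspace X" for x
  proof -
    obtain n where "x \<in> K n" using assms(3) x by blast
    then show ?thesis
      unfolding D_def by (auto intro: LeastI dest: not_less_Least)
  qed
  have disjoint: "n = m" if "x \<in> D n" "x \<in> D m" for x n m
    using that unfolding D_def by (metis DiffE UN_I lessThan_iff nat_neq_iff)
  show ?thesis
  proof (rule pasting_lemma[where I = UNIV and T = D and f = S])
    show "openin X (D n)" for n
      unfolding D_def using assms(1,2) by (intro openin_diff closedin_Union) auto
    show "continuous_map (subtopology X (D n)) Y (S n)" for n
      by (rule continuous_map_from_subtopology_mono[OF assms(4)]) (auto simp: D_def)
    show "S n x = S m x" if "x \<in> topspace X \<inter> D n \<inter> D m" for n m x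
      using that disjoint by blast
    show "\<exists>n. n \<in> UNIV \<and> x \<in> D n \<and> S (LEAST n. x \<in> K n) x = S n x"
      if "x \<in> topspace X" for x
      using first_piece[OF that] by blast
  qed
qed

lemma Lindelof_space_countable_open_cover:
  fixes X :: "'a topology"
  assumes "Lindelof_space X" "Q {}"
    and "\<And>x. x \<in> topspace X \<Longrightarrow> \<exists>U. openin X U \<and> x \<in> U \<and> Q U"
  obtains K :: "nat \<Rightarrow> 'a set"
  where "\<And>n. openin X (K n)" "\<And>n. Q (K n)" "topspace X \<subseteq> (\<Union>n. K n)"
proof -
  let ?\<U> = "{U. openin X U \<and> Q U}"
  have "topspace X \<subseteq> \<Union>?\<U>"
    using assms(3) by blast
  then obtain \<V> where \<V>: "countable \<V>" "\<V> \<subseteq> ?\<U>" "topspace X \<subseteq> \<Union>\<V>"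
    using assms(1) unfolding Lindelof_space_alt by (metis (no_types, lifting) mem_Collect_eq)
  (* {} is adjoined so that the enumeration exists even if \<V> is empty. *)
  define K where "K = from_nat_into (insert {} \<V>)"
  have range_K: "range K = insert {} \<V>"
    unfolding K_def using \<V>(1) by simp
  show ?thesis
  proof (rule that)
    show "openin X (K n)" "Q (K n)" for n
      using rangeI[of K n] \<V>(2) assms(2) unfolding range_K by auto
    show "topspace X \<subseteq> (\<Union>n. K n)"
      using \<V>(3) range_K by simp
  qed
qed

lemma discrete_twist_unit_section:
  assumes "discrete_twist G T \<Sigma> i q" "1 \<in> T"
  shows "continuous_map (unit_top G) (gtop \<Sigma>) (\<lambda>x. i (x, 1))"
    and "\<And>x. x \<in> units G \<Longrightarrow> q (i (x, 1)) = x"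
    and "\<And>x. x \<in> units G \<Longrightarrow> i (x, 1) \<in> units \<Sigma>"
proof -
  have "homeomorphic_map (unit_top G) (unit_top \<Sigma>) (\<lambda>x. i (x, 1))"
    using assms(1) unfolding discrete_twist_def by (elim conjE)
  then show "continuous_map (unit_top G) (gtop \<Sigma>) (\<lambda>x. i (x, 1))"
    unfolding unit_top_def
    by (meson continuous_map_into_fulltopology homeomorphic_imp_continuous_map)
next
  fix x assume x: "x \<in> units G"
  have "units \<Sigma> = i ` (units G \<times> {1})"
    using assms(1) unfolding discrete_twist_def by (elim conjE)
  moreover have "\<forall>x \<in> units G. i ` ({x} \<times> T) = {e \<in> arrows \<Sigma>. q e = x}"
    using assms(1) unfolding discrete_twist_def by (elim conjE)
  ultimately show "q (i (x, 1)) = x" "i (x, 1) \<in> units \<Sigma>"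
    using x assms(2) by blast+
qed

lemma discrete_twist_compact_open_local_section:
  assumes "discrete_twist G T \<Sigma> i q" "ample G" "\<alpha> \<in> arrows G"
  obtains C S where "compactin (gtop G) C" "openin (gtop G) C" "\<alpha> \<in> C"
    and "continuous_map (subtopology (gtop G) C) (gtop \<Sigma>) S" "\<And>\<beta>. \<beta> \<in> C \<Longrightarrow> q (S \<beta>) = \<beta>"
proof -
  obtain B S where B: "open_bisection G B" "\<alpha> \<in> B"
    and S: "continuous_map (subtopology (gtop G) B) (gtop \<Sigma>) S" "\<forall>\<beta> \<in> B. q (S \<beta>) = \<beta>"
  proof -
    have "\<forall>\<alpha> \<in> arrows G. \<exists>B P. open_bisection G B \<and> \<alpha> \<in> B \<and>
        continuous_map (subtopology (gtop G) B) (gtop \<Sigma>) P \<and>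
        (\<forall>\<beta> \<in> B. q (P \<beta>) = \<beta>) \<and>
        homeomorphic_map (prod_topology (subtopology (gtop G) B) (discrete_topology T))
          (subtopology (gtop \<Sigma>) {e \<in> arrows \<Sigma>. q e \<in> B})
          (\<lambda>(\<beta>, z). gmul \<Sigma> (i (grng G \<beta>, z)) (P \<beta>))"
      using assms(1) unfolding discrete_twist_def by (elim conjE)
    then show ?thesis using that assms(3) by blast
  qed
  then obtain C where C: "compactin (gtop G) C" "open_bisection G C" "\<alpha> \<in> C" "C \<subseteq> B"
    using assms(2) unfolding ample_def open_bisection_def by blast
  show ?thesis
  proof (rule that)
    show "continuous_map (subtopology (gtop G) C) (gtop \<Sigma>) S"
      using S(1) C(4) by (rule continuous_map_from_subtopology_mono)
    show "openin (gtop G) C" using C(2) by (simp add: open_bisection_def)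
    show "q (S \<beta>) = \<beta>" if "\<beta> \<in> C" for \<beta> using S(2) C(4) that by blast
  qed (fact C(1), fact C(3))
qed

lemma ample_imp_openin_units:
  assumes "topological_groupoid G" "ample G"
  shows "openin (gtop G) (units G)"
proof (rule openin_units[OF assms(1)])
  fix x assume "x \<in> units G"
  then have "x \<in> topspace (gtop G)"
    using assms(1) by (simp add: units_eq_fixed_points_of_range topological_groupoid_def arrows_def)
  then show "\<exists>B. open_bisection G B \<and> x \<in> B"
    using assms(2) openin_topspace unfolding ample_def by blast
qed

lemma discrete_twist_clopen_cover_by_local_sections:
  fixes G :: "('a, 'b) groupoid_scheme" and \<Sigma> :: "('s, 'c) groupoid_scheme"
  assumes "discrete_twist G T \<Sigma> i q" "ample G"
    and "Hausdorff_space (gtop G)" "Lindelof_space (gtop G)"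
  obtains K :: "nat \<Rightarrow> 'a set" and S :: "nat \<Rightarrow> 'a \<Rightarrow> 's"
  where "\<And>n. openin (gtop G) (K n)" "\<And>n. closedin (gtop G) (K n)"
    and "topspace (gtop G) \<subseteq> (\<Union>n. K n)"
    and "\<And>n. continuous_map (subtopology (gtop G) (K n)) (gtop \<Sigma>) (S n)"
    and "\<And>n \<beta>. \<beta> \<in> K n \<Longrightarrow> q (S n \<beta>) = \<beta>"
proof -
  let ?X = "gtop G"
  let ?Q = "\<lambda>C. compactin ?X C \<and>
    (\<exists>S. continuous_map (subtopology ?X C) (gtop \<Sigma>) S \<and> (\<forall>\<beta> \<in> C. q (S \<beta>) = \<beta>))"
  have empty: "?Q {}"
    by (simp add: continuous_map_on_empty)
  have local_sections: "\<exists>C. openin ?X C \<and> \<alpha> \<in> C \<and> ?Q C" if "\<alpha> \<in> topspace ?X" for \<alpha>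
    using discrete_twist_compact_open_local_section[OF assms(1,2), of \<alpha>] that
    by (metis arrows_def)
  obtain K :: "nat \<Rightarrow> 'a set"
    where K: "\<And>n. openin ?X (K n)" "\<And>n. ?Q (K n)" "topspace ?X \<subseteq> (\<Union>n. K n)"
    using Lindelof_space_countable_open_cover[of ?X ?Q, OF assms(4) empty local_sections] by blast
  have K_closed: "closedin ?X (K n)" for n
    using K(2)[of n] compactin_imp_closedin[OF assms(3)] by simp
  have "\<forall>n. \<exists>S. continuous_map (subtopology ?X (K n)) (gtop \<Sigma>) S \<and>
      (\<forall>\<beta> \<in> K n. q (S \<beta>) = \<beta>)"
    using K(2) by simp
  then obtain S where S: "\<And>n. continuous_map (subtopology ?X (K n)) (gtop \<Sigma>) (S n)"
    "\<And>n \<beta>. \<beta> \<in> K n \<Longrightarrow> q (S n \<beta>) = \<beta>"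
    by metis
  show ?thesis
    by (rule that[OF K(1) K_closed K(3) S])
qed

lemma discrete_twist_global_section_from_clopen_cover:
  fixes K :: "nat \<Rightarrow> 'a set"
  assumes "discrete_twist G T \<Sigma> i q" "1 \<in> T"
    and "openin (gtop G) (units G)" "closedin (gtop G) (units G)"
    and "\<And>n. openin (gtop G) (K n)" "\<And>n. closedin (gtop G) (K n)"
    and "topspace (gtop G) \<subseteq> (\<Union>n. K n)"
    and "\<And>n. continuous_map (subtopology (gtop G) (K n)) (gtop \<Sigma>) (S n)"
    and "\<And>n \<beta>. \<beta> \<in> K n \<Longrightarrow> q (S n \<beta>) = \<beta>"
  shows "\<exists>P. continuous_map (gtop G) (gtop \<Sigma>) P \<and>
           (\<forall>\<alpha> \<in> arrows G. q (P \<alpha>) = \<alpha>) \<and> P ` units G \<subseteq> units \<Sigma>"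
proof -
  define K' where "K' = case_nat (units G) K"
  define S' where "S' = case_nat (\<lambda>x. i (x, 1)) S"
  define P where "P x = S' (LEAST n. x \<in> K' n) x" for x
  have K'_cover: "topspace (gtop G) \<subseteq> (\<Union>n. K' n)"
  proof
    fix x assume "x \<in> topspace (gtop G)"
    then obtain n where "x \<in> K n" using assms(7) by blast
    then have "x \<in> K' (Suc n)" by (simp add: K'_def)
    then show "x \<in> (\<Union>n. K' n)" by blast
  qed
  have "continuous_map (gtop G) (gtop \<Sigma>) P"
    unfolding P_def
  proof (rule continuous_map_first_piece_of_clopen_cover[where K = K' and S = S'])
    show "openin (gtop G) (K' n)" "closedin (gtop G) (K' n)" for n
      using assms(3-6) by (simp_all add: K'_def split: nat.split)
    show "continuous_map (subtopology (gtop G) (K' n)) (gtop \<Sigma>) (S' n)" for n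
      using discrete_twist_unit_section(1)[OF assms(1,2)] assms(8)
      by (simp add: K'_def S'_def unit_top_def split: nat.split)
  qed (fact K'_cover)
  moreover have "q (P \<alpha>) = \<alpha>" if "\<alpha> \<in> arrows G" for \<alpha>
  proof -
    have "q (S' n \<alpha>) = \<alpha>" if "\<alpha> \<in> K' n" for n
      using that discrete_twist_unit_section(2)[OF assms(1,2)] assms(9)
      by (cases n) (simp_all add: K'_def S'_def)
    moreover obtain m where "\<alpha> \<in> K' m"
      using K'_cover \<open>\<alpha> \<in> arrows G\<close> by (auto simp: arrows_def)
    ultimately show ?thesis
      unfolding P_def by (metis LeastI)
  qed
  moreover have "P x \<in> units \<Sigma>" if "x \<in> units G" for x
  proof -
    have "(LEAST n. x \<in> K' n) = 0"
      using that by (intro Least_eq_0) (simp add: K'_def)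
    then show ?thesis
      using discrete_twist_unit_section(3)[OF assms(1,2) that] by (simp add: P_def S'_def)
  qed
  ultimately show ?thesis by blast
qed

theorem theorem4p10:
  fixes G :: "('a, 'b) groupoid_scheme"
    and \<Sigma> :: "('s, 'c) groupoid_scheme"
    and T :: "'r::comm_ring_1 set"
    and i :: "'a \<times> 'r \<Rightarrow> 's"
    and q :: "'s \<Rightarrow> 'a"
  assumes "lcH_groupoid G"
    and "second_countable (gtop G)"
    and "ample G"
    and "1 \<in> T"
    and "\<forall>z \<in> T. \<forall>w \<in> T. z * w \<in> T"
    and "\<forall>z \<in> T. \<exists>w \<in> T. z * w = 1"
    and "discrete_twist G T \<Sigma> i q"
  shows "\<exists>P. continuous_map (gtop G) (gtop \<Sigma>) P \<and>
             (\<forall>\<alpha> \<in> arrows G. q (P \<alpha>) = \<alpha>) \<and>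
             P ` units G \<subseteq> units \<Sigma>"
proof -
  have tg: "topological_groupoid G" and haus: "Hausdorff_space (gtop G)"
    using assms(1) by (simp_all add: lcH_groupoid_def)
  have Lindelof: "Lindelof_space (gtop G)"
    using assms(2) by (rule second_countable_imp_Lindelof_space)
  obtain K :: "nat \<Rightarrow> 'a set" and S
    where K: "\<And>n. openin (gtop G) (K n)" "\<And>n. closedin (gtop G) (K n)"
      "topspace (gtop G) \<subseteq> (\<Union>n. K n)"
    and S: "\<And>n. continuous_map (subtopology (gtop G) (K n)) (gtop \<Sigma>) (S n)"
      "\<And>n \<beta>. \<beta> \<in> K n \<Longrightarrow> q (S n \<beta>) = \<beta>"
    using discrete_twist_clopen_cover_by_local_sections[OF assms(7,3) haus Lindelof] by blast
  show ?thesis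
    by (rule discrete_twist_global_section_from_clopen_cover[OF assms(7,4)
          ample_imp_openin_units[OF tg assms(3)] closedin_units[OF tg haus] K S])
qed

end
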